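(* Let $A$ be a meet-complemented lattice in which $\Box x$ and $\Diamond x$ exist for every $x\in A$, and let $\{a_i: i\in I\}$ be an arbitrary subset of $A$. Then (i) if both $\bigwedge_{i\in I}a_i$ and $\bigwedge_{i\in I}\Box a_i$ exist, then $\bigwedge_{i\in I}\Box a_i=\Box\bigwedge_{i\in I}a_i$; and (ii) if both $\bigvee_{i\in I}a_i$ and $\bigvee_{i\in I}\Diamond a_i$ exist, then $\bigvee_{i\in I}\Diamond a_i=\Diamond\bigvee_{i\in I}a_i$.
   Context: A meet-complemented lattice is a lattice $(L,\le)$ (not necessarily distributive) such that for every $a\in L$ the element $\neg a=\max\{b\in L: a\wedge b\le c\ \text{for all } c\in L\}$ exists; it is bounded with bottom $0$ and top $1$. For $a\in L$, $\Box a=\max\{b\in L: a\vee\neg b=1\}$ and $\Diamond a=\min\{b\in L: \neg a\vee b=1\}$. *)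

theory Defs
  imports Main
begin

definition is_max :: "'a::order set \<Rightarrow> 'a \<Rightarrow> bool" where
  "is_max S m \<longleftrightarrow> m \<in> S \<and> (\<forall>b\<in>S. b \<le> m)"

definition is_min :: "'a::order set \<Rightarrow> 'a \<Rightarrow> bool" where
  "is_min S m \<longleftrightarrow> m \<in> S \<and> (\<forall>b\<in>S. m \<le> b)"

definition is_glb :: "'a::order set \<Rightarrow> 'a \<Rightarrow> bool" where
  "is_glb S m \<longleftrightarrow> (\<forall>x\<in>S. m \<le> x) \<and> (\<forall>y. (\<forall>x\<in>S. y \<le> x) \<longrightarrow> y \<le> m)"

definition is_lub :: "'a::order set \<Rightarrow> 'a \<Rightarrow> bool" where
  "is_lub S m \<longleftrightarrow> (\<forall>x\<in>S. x \<le> m) \<and> (\<forall>y. (\<forall>x\<in>S. x \<le> y) \<longrightarrow> m \<le> y)"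

definition neg_set :: "'a::bounded_lattice \<Rightarrow> 'a set" where
  "neg_set a = {b. \<forall>c. inf a b \<le> c}"

definition neg_exists :: "'a::bounded_lattice \<Rightarrow> bool" where
  "neg_exists a \<longleftrightarrow> (\<exists>m. is_max (neg_set a) m)"

definition neg :: "'a::bounded_lattice \<Rightarrow> 'a" where
  "neg a = (THE m. is_max (neg_set a) m)"

definition box_set :: "'a::bounded_lattice \<Rightarrow> 'a set" where
  "box_set a = {b. sup a (neg b) = top}"

definition box_exists :: "'a::bounded_lattice \<Rightarrow> bool" where
  "box_exists a \<longleftrightarrow> (\<exists>m. is_max (box_set a) m)"

definition box :: "'a::bounded_lattice \<Rightarrow> 'a" where
  "box a = (THE m. is_max (box_set a) m)"

definition dia_set :: "'a::bounded_lattice \<Rightarrow> 'a set" where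
  "dia_set a = {b. sup (neg a) b = top}"

definition dia_exists :: "'a::bounded_lattice \<Rightarrow> bool" where
  "dia_exists a \<longleftrightarrow> (\<exists>m. is_min (dia_set a) m)"

definition dia :: "'a::bounded_lattice \<Rightarrow> 'a" where
  "dia a = (THE m. is_min (dia_set a) m)"

end

theory Submission
  imports Defs
begin

text \<open>\<open>\<diamond>\<close> is lower adjoint to \<open>\<box>\<close>: both \<open>b \<le> \<box>a\<close> and \<open>\<diamond>b \<le> a\<close> say \<open>a \<squnion> \<not>b = 1\<close>,
  because \<open>\<not>\<close> is antitone. An upper adjoint preserves every existing meet and a lower
  adjoint every existing join, which is the theorem.\<close>

lemma is_max_The:
  fixes S :: "'a::order set"
  assumes "is_max S m"
  shows "is_max S (THE m. is_max S m)"
proof (rule theI)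
  show "is_max S m" by fact
  show "k = m" if "is_max S k" for k
    using that assms unfolding is_max_def by (meson antisym)
qed

lemma is_min_The:
  fixes S :: "'a::order set"
  assumes "is_min S m"
  shows "is_min S (THE m. is_min S m)"
proof (rule theI)
  show "is_min S m" by fact
  show "k = m" if "is_min S k" for k
    using that assms unfolding is_min_def by (meson antisym)
qed

lemma is_glb_unique:
  fixes S :: "'a::order set"
  shows "is_glb S m \<Longrightarrow> is_glb S n \<Longrightarrow> m = n"
  unfolding is_glb_def by (meson antisym)

lemma is_lub_unique:
  fixes S :: "'a::order set"
  shows "is_lub S m \<Longrightarrow> is_lub S n \<Longrightarrow> m = n"
  unfolding is_lub_def by (meson antisym)

lemma galois_upper_preserves_glb:
  fixes l :: "'a::order \<Rightarrow> 'b::order" and u :: "'b \<Rightarrow> 'a"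
  assumes adj: "\<And>x y. l x \<le> y \<longleftrightarrow> x \<le> u y" and glb: "is_glb S m"
  shows "is_glb (u ` S) (u m)"
  unfolding is_glb_def
proof (intro conjI ballI allI impI)
  fix y assume "y \<in> u ` S"
  then obtain x where "x \<in> S" "y = u x" by blast
  then have "l (u m) \<le> x"
    using glb adj order_trans unfolding is_glb_def by blast
  then show "u m \<le> y" using adj \<open>y = u x\<close> by blast
next
  fix y assume "\<forall>z\<in>u ` S. y \<le> z"
  then have "\<forall>x\<in>S. l y \<le> x" using adj by blast
  then show "y \<le> u m" using glb adj unfolding is_glb_def by blast
qed

lemma galois_lower_preserves_lub:
  fixes l :: "'a::order \<Rightarrow> 'b::order" and u :: "'b \<Rightarrow> 'a"
  assumes adj: "\<And>x y. l x \<le> y \<longleftrightarrow> x \<le> u y" and lub: "is_lub S m"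
  shows "is_lub (l ` S) (l m)"
  unfolding is_lub_def
proof (intro conjI ballI allI impI)
  fix y assume "y \<in> l ` S"
  then obtain x where "x \<in> S" "y = l x" by blast
  then have "x \<le> u (l m)"
    using lub adj order_trans unfolding is_lub_def by blast
  then show "y \<le> l m" using adj \<open>y = l x\<close> by blast
next
  fix y assume "\<forall>z\<in>l ` S. z \<le> y"
  then have "\<forall>x\<in>S. x \<le> u y" using adj by blast
  then show "l m \<le> y" using lub adj unfolding is_lub_def by blast
qed

lemma neg_antimono:
  fixes b c :: "'a::bounded_lattice"
  assumes "neg_exists b" "neg_exists c" "b \<le> c"
  shows "neg c \<le> neg b"
proof -
  have max_c: "is_max (neg_set c) (neg c)" and max_b: "is_max (neg_set b) (neg b)"
    using assms is_max_The unfolding neg_exists_def neg_def by blast+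
  have "inf b (neg c) \<le> inf c (neg c)" using \<open>b \<le> c\<close> by (simp add: le_infI1)
  moreover have "\<forall>d. inf c (neg c) \<le> d" using max_c unfolding is_max_def neg_set_def by simp
  ultimately have "neg c \<in> neg_set b" unfolding neg_set_def using order_trans by blast
  with max_b show ?thesis unfolding is_max_def by blast
qed

lemma le_box_iff:
  fixes a b :: "'a::bounded_lattice"
  assumes "\<forall>x::'a. neg_exists x" "box_exists a"
  shows "b \<le> box a \<longleftrightarrow> sup a (neg b) = top"
proof
  have max_box: "is_max (box_set a) (box a)"
    using assms is_max_The unfolding box_exists_def box_def by blast
  {
    assume "b \<le> box a"
    then have "neg (box a) \<le> neg b" using neg_antimono assms(1) by blast
    moreover have "sup a (neg (box a)) = top" using max_box unfolding is_max_def box_set_def by simp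
    ultimately show "sup a (neg b) = top" by (metis sup.mono order_refl top.extremum_uniqueI)
  next
    assume "sup a (neg b) = top"
    then show "b \<le> box a" using max_box unfolding is_max_def box_set_def by simp
  }
qed

lemma dia_le_iff:
  fixes b c :: "'a::bounded_lattice"
  assumes "dia_exists b"
  shows "dia b \<le> c \<longleftrightarrow> sup (neg b) c = top"
proof
  have min_dia: "is_min (dia_set b) (dia b)"
    using assms is_min_The unfolding dia_exists_def dia_def by blast
  {
    assume "dia b \<le> c"
    moreover have "sup (neg b) (dia b) = top" using min_dia unfolding is_min_def dia_set_def by simp
    ultimately show "sup (neg b) c = top" by (metis sup.mono order_refl top.extremum_uniqueI)
  next
    assume "sup (neg b) c = top"
    then show "dia b \<le> c" using min_dia unfolding is_min_def dia_set_def by simp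
  }
qed

lemma dia_le_iff_le_box:
  fixes a b :: "'a::bounded_lattice"
  assumes "\<forall>x::'a. neg_exists x" "box_exists a" "dia_exists b"
  shows "dia b \<le> a \<longleftrightarrow> b \<le> box a"
  using le_box_iff[OF assms(1,2)] dia_le_iff[OF assms(3)] by (simp add: sup_commute)

theorem proposition10:
  fixes a :: "'i \<Rightarrow> 'a::bounded_lattice" and I :: "'i set"
  assumes meet_complemented: "\<forall>x::'a. neg_exists x"
    and box_ex: "\<forall>x::'a. box_exists x"
    and dia_ex: "\<forall>x::'a. dia_exists x"
  shows "(\<forall>m n. is_glb (a ` I) m \<and> is_glb ((\<lambda>i. box (a i)) ` I) n \<longrightarrow> n = box m)
       \<and> (\<forall>m n. is_lub (a ` I) m \<and> is_lub ((\<lambda>i. dia (a i)) ` I) n \<longrightarrow> n = dia m)"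
proof -
  have adj: "\<And>x y::'a. dia x \<le> y \<longleftrightarrow> x \<le> box y"
    using dia_le_iff_le_box assms by blast
  have "is_glb ((\<lambda>i. box (a i)) ` I) (box m)" if "is_glb (a ` I) m" for m
    using galois_upper_preserves_glb[OF adj that] by (simp add: image_image)
  moreover have "is_lub ((\<lambda>i. dia (a i)) ` I) (dia m)" if "is_lub (a ` I) m" for m
    using galois_lower_preserves_lub[OF adj that] by (simp add: image_image)
  ultimately show ?thesis using is_glb_unique is_lub_unique by blast
qed

end
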